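(* Let $R$ be a pmp equivalence relation on $(X,\mu)$ and $F\subseteq\llbracket R\rrbracket$ a finite subset. Then $s(F)\leq\operatorname{cost}(F)$, where $\operatorname{cost}(F)=\sum_{s\in F}\mu(\operatorname{dom}s)$.
   Context: Let $(X,\mu)$ be a standard probability space and $R$ a pmp countable Borel equivalence relation. $\llbracket R\rrbracket$ denotes the set of partial measure-preserving Borel bijections between Borel subsets of $X$ with graph contained in $R$, modulo null sets, with composition, inverses and identity $1$. Pairwise orthogonal elements (pairwise disjoint domains and ranges) have a sum; $\mathbf\Sigma F$ is the set of finite sums of pairwise orthogonal elements of $F$; $F_\pm=F\cup\{s^{-1}:s\in F\}\cup\{1\}$; $F_\pm^n$ the products of $n$ elements of $F_\pm$. $|s-t|=\mu\{x\in\operatorname{dom}s\cup\operatorname{dom}t:s(x)\neq t(x)\}$ (with $s(x)\neq t(x)$ on $\operatorname{dom}s\triangle\operatorname{dom}t$), $\tau(s)=\mu\{x\in\operatorname{dom}s:s(x)=x\}$. $\llbracket d\rrbracket$: partial permutations of $\{1,\dots,d\}$ with uniform measure, same distance, trace $\operatorname{tr}$. ${\rm SA}(F,n,\delta,d)$ is the set of maps $\varphi:\llbracket R\rrbracket\to\llbracket d\rrbracket$ with $\varphi(1)=1$ such that $|\varphi(st)-\varphi(s)\varphi(t)|<\delta$ for all $s,t\in\mathbf\Sigma F_\pm^n$ with $st\in\mathbf\Sigma F_\pm^n$, and $|\operatorname{tr}(\varphi(s))-\tau(s)|<\delta$ for all $s\in\mathbf\Sigma F_\pm^n$. ${\rm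 NSA}(F,n,\delta,d)$ is the number of distinct restrictions $\varphi|_F$, $\varphi\in{\rm SA}(F,n,\delta,d)$, and $s(F)=\inf_n\inf_{\delta>0}\limsup_{d\to\infty}\frac{1}{d\log d}\log{\rm NSA}(F,n,\delta,d)$ ($\log0=-\infty$). *)

theory Defs
  imports "HOL-Probability.Probability"
begin

definition borel_pbij :: "'a measure \<Rightarrow> ('a \<times> 'a) set \<Rightarrow> ('a \<rightharpoonup> 'a) \<Rightarrow> bool" where
  "borel_pbij M R f \<longleftrightarrow> dom f \<in> sets M \<and> inj_on f (dom f)
     \<and> (\<forall>x\<in>dom f. (x, the (f x)) \<in> R)
     \<and> (\<forall>A\<in>sets M. {x\<in>dom f. the (f x) \<in> A} \<in> sets M)
     \<and> (\<forall>A\<in>sets M. A \<subseteq> dom f \<longrightarrow> (\<lambda>x. the (f x)) ` A \<in> sets M)"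

definition meas_pres :: "'a measure \<Rightarrow> ('a \<rightharpoonup> 'a) \<Rightarrow> bool" where
  "meas_pres M f \<longleftrightarrow> (\<forall>A\<in>sets M. A \<subseteq> dom f \<longrightarrow>
      emeasure M ((\<lambda>x. the (f x)) ` A) = emeasure M A)"

definition cber :: "'a measure \<Rightarrow> ('a \<times> 'a) set \<Rightarrow> bool" where
  "cber M R \<longleftrightarrow> equiv (space M) R \<and> R \<in> sets (M \<Otimes>\<^sub>M M)
     \<and> (\<forall>x\<in>space M. countable (R `` {x}))"

definition pmp_rel :: "'a measure \<Rightarrow> ('a \<times> 'a) set \<Rightarrow> bool" where
  "pmp_rel M R \<longleftrightarrow> (\<forall>f. borel_pbij M R f \<longrightarrow> meas_pres M f)"

section \<open>The full pseudogroup [[R]] (classes modulo null sets)\<close>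

definition pmp_partial :: "'a measure \<Rightarrow> ('a \<times> 'a) set \<Rightarrow> ('a \<rightharpoonup> 'a) \<Rightarrow> bool" where
  "pmp_partial M R f \<longleftrightarrow> borel_pbij M R f \<and> meas_pres M f"

text \<open>Class modulo null sets (f x \<noteq> g x includes the symmetric difference of domains).\<close>
definition pg_class :: "'a measure \<Rightarrow> ('a \<times> 'a) set \<Rightarrow> ('a \<rightharpoonup> 'a) \<Rightarrow> ('a \<rightharpoonup> 'a) set" where
  "pg_class M R f = {g. pmp_partial M R g \<and> (AE x in M. g x = f x)}"

definition pseudogroup :: "'a measure \<Rightarrow> ('a \<times> 'a) set \<Rightarrow> ('a \<rightharpoonup> 'a) set set" where
  "pseudogroup M R = pg_class M R ` {f. pmp_partial M R f}"

definition pg_rep :: "('a \<rightharpoonup> 'a) set \<Rightarrow> ('a \<rightharpoonup> 'a)" where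
  "pg_rep S = (SOME f. f \<in> S)"

definition pg_mult :: "'a measure \<Rightarrow> ('a \<times> 'a) set \<Rightarrow> ('a \<rightharpoonup> 'a) set \<Rightarrow> ('a \<rightharpoonup> 'a) set \<Rightarrow> ('a \<rightharpoonup> 'a) set" where
  "pg_mult M R S T = pg_class M R (pg_rep S \<circ>\<^sub>m pg_rep T)"

definition pinv :: "('a \<rightharpoonup> 'b) \<Rightarrow> ('b \<rightharpoonup> 'a)" where
  "pinv f = (\<lambda>y. if y \<in> ran f then Some (THE x. f x = Some y) else None)"

definition pg_inv :: "'a measure \<Rightarrow> ('a \<times> 'a) set \<Rightarrow> ('a \<rightharpoonup> 'a) set \<Rightarrow> ('a \<rightharpoonup> 'a) set" where
  "pg_inv M R S = pg_class M R (pinv (pg_rep S))"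

definition pg_one :: "'a measure \<Rightarrow> ('a \<times> 'a) set \<Rightarrow> ('a \<rightharpoonup> 'a) set" where
  "pg_one M R = pg_class M R Some"

definition pg_orth :: "'a measure \<Rightarrow> ('a \<rightharpoonup> 'a) set \<Rightarrow> ('a \<rightharpoonup> 'a) set \<Rightarrow> bool" where
  "pg_orth M S T \<longleftrightarrow> dom (pg_rep S) \<inter> dom (pg_rep T) \<in> null_sets M
      \<and> ran (pg_rep S) \<inter> ran (pg_rep T) \<in> null_sets M"

definition pg_sum :: "'a measure \<Rightarrow> ('a \<times> 'a) set \<Rightarrow> ('a \<rightharpoonup> 'a) set set \<Rightarrow> ('a \<rightharpoonup> 'a) set" where
  "pg_sum M R G = pg_class M R (\<lambda>x. if \<exists>S\<in>G. x \<in> dom (pg_rep S)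
      then pg_rep (SOME S. S \<in> G \<and> x \<in> dom (pg_rep S)) x else None)"

definition SigmaSums :: "'a measure \<Rightarrow> ('a \<times> 'a) set \<Rightarrow> ('a \<rightharpoonup> 'a) set set \<Rightarrow> ('a \<rightharpoonup> 'a) set set" where
  "SigmaSums M R A = {pg_sum M R G | G. finite G \<and> G \<subseteq> A
      \<and> (\<forall>S\<in>G. \<forall>T\<in>G. S \<noteq> T \<longrightarrow> pg_orth M S T)}"

definition Fpm :: "'a measure \<Rightarrow> ('a \<times> 'a) set \<Rightarrow> ('a \<rightharpoonup> 'a) set set \<Rightarrow> ('a \<rightharpoonup> 'a) set set" where
  "Fpm M R F = F \<union> pg_inv M R ` F \<union> {pg_one M R}"

definition Fpow :: "'a measure \<Rightarrow> ('a \<times> 'a) set \<Rightarrow> ('a \<rightharpoonup> 'a) set set \<Rightarrow> nat \<Rightarrow> ('a \<rightharpoonup> 'a) set set" where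
  "Fpow M R F n = {foldr (pg_mult M R) xs (pg_one M R) | xs. length xs = n \<and> set xs \<subseteq> Fpm M R F}"

definition pg_dist :: "'a measure \<Rightarrow> ('a \<rightharpoonup> 'a) set \<Rightarrow> ('a \<rightharpoonup> 'a) set \<Rightarrow> real" where
  "pg_dist M S T = measure M {x. pg_rep S x \<noteq> pg_rep T x}"

definition pg_tau :: "'a measure \<Rightarrow> ('a \<rightharpoonup> 'a) set \<Rightarrow> real" where
  "pg_tau M S = measure M {x. pg_rep S x = Some x}"

definition pperm :: "nat \<Rightarrow> (nat \<rightharpoonup> nat) \<Rightarrow> bool" where
  "pperm d \<sigma> \<longleftrightarrow> dom \<sigma> \<subseteq> {1..d} \<and> ran \<sigma> \<subseteq> {1..d} \<and> inj_on \<sigma> (dom \<sigma>)"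

definition pp_one :: "nat \<Rightarrow> (nat \<rightharpoonup> nat)" where
  "pp_one d = (\<lambda>i. if i \<in> {1..d} then Some i else None)"

definition pp_dist :: "nat \<Rightarrow> (nat \<rightharpoonup> nat) \<Rightarrow> (nat \<rightharpoonup> nat) \<Rightarrow> real" where
  "pp_dist d \<sigma> \<tau> = real (card {i\<in>{1..d}. \<sigma> i \<noteq> \<tau> i}) / real d"

definition pp_tr :: "nat \<Rightarrow> (nat \<rightharpoonup> nat) \<Rightarrow> real" where
  "pp_tr d \<sigma> = real (card {i\<in>{1..d}. \<sigma> i = Some i}) / real d"

definition SA :: "'a measure \<Rightarrow> ('a \<times> 'a) set \<Rightarrow> ('a \<rightharpoonup> 'a) set set \<Rightarrow> nat \<Rightarrow> real \<Rightarrow> nat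
    \<Rightarrow> (('a \<rightharpoonup> 'a) set \<Rightarrow> (nat \<rightharpoonup> nat)) set" where
  "SA M R F n \<delta> d = (let Sg = SigmaSums M R (Fpow M R F n) in
     {\<phi>. (\<forall>S\<in>pseudogroup M R. pperm d (\<phi> S)) \<and> \<phi> (pg_one M R) = pp_one d
       \<and> (\<forall>s\<in>Sg. \<forall>t\<in>Sg. pg_mult M R s t \<in> Sg \<longrightarrow>
            pp_dist d (\<phi> (pg_mult M R s t)) (\<phi> s \<circ>\<^sub>m \<phi> t) < \<delta>)
       \<and> (\<forall>s\<in>Sg. \<bar>pp_tr d (\<phi> s) - pg_tau M s\<bar> < \<delta>)})"

definition NSA :: "'a measure \<Rightarrow> ('a \<times> 'a) set \<Rightarrow> ('a \<rightharpoonup> 'a) set set \<Rightarrow> nat \<Rightarrow> real \<Rightarrow> nat \<Rightarrow> nat" where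
  "NSA M R F n \<delta> d = card ((\<lambda>\<phi>. restrict \<phi> F) ` SA M R F n \<delta> d)"

text \<open>log 0 = -infinity; natural logarithms (base cancels in the ratio).\<close>
definition sofic_s :: "'a measure \<Rightarrow> ('a \<times> 'a) set \<Rightarrow> ('a \<rightharpoonup> 'a) set set \<Rightarrow> ereal" where
  "sofic_s M R F = (INF n\<in>{1..}. INF \<delta>\<in>{0<..}. limsup (\<lambda>d.
      if NSA M R F n \<delta> d = 0 then -\<infinity>
      else ereal (ln (real (NSA M R F n \<delta> d)) / (real d * ln (real d)))))"

definition pg_cost :: "'a measure \<Rightarrow> ('a \<rightharpoonup> 'a) set set \<Rightarrow> real" where
  "pg_cost M F = (\<Sum>S\<in>F. measure M (dom (pg_rep S)))"

end

theory Submission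
  imports Defs
begin

(* We bound s(F) by its value at level n = 2.  For S in F with representative f, the element
   e_S = S^-1 S is the class of the partial identity on dom f, so e_S has trace mu(dom S).  Both
   S and e_S are products of two letters of F_pm, hence lie in Sigma F_pm^2, and they satisfy
   S = S e_S and e_S = e_S e_S.  For a sofic approximation phi with defect delta every point of
   dom phi(S) either witnesses the defect of phi(S) ~ phi(S) phi(e_S), or that of
   phi(e_S) ~ phi(e_S)^2, or is a fixed point of phi(e_S); hence |dom phi(S)| <= (mu(dom S) + 3 delta) d.
   Partial permutations of {1..d} with at most K points in the domain number at most 2^d d^K, so
   log NSA(F,2,delta,d) / (d log d) <= |F| log 2 / log d + cost(F) + 3 delta |F|.  Letting d -> oo
   and then delta -> 0 gives the theorem. *)


lemma dom_map_comp: "dom (f \<circ>\<^sub>m g) = {x\<in>dom g. the (g x) \<in> dom f}"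
  by (auto simp: map_comp_def split: option.splits)

lemma inj_on_dom_map_comp:
  assumes f: "inj_on f (dom f)" and g: "inj_on g (dom g)"
  shows "inj_on (f \<circ>\<^sub>m g) (dom (f \<circ>\<^sub>m g))"
proof (rule inj_onI)
  fix x y
  assume x: "x \<in> dom (f \<circ>\<^sub>m g)" and y: "y \<in> dom (f \<circ>\<^sub>m g)"
    and eq: "(f \<circ>\<^sub>m g) x = (f \<circ>\<^sub>m g) y"
  have "\<exists>a. g x = Some a \<and> a \<in> dom f" "\<exists>b. g y = Some b \<and> b \<in> dom f"
    using x y by (auto simp: map_comp_def split: option.splits)
  then obtain a b where a: "g x = Some a" "a \<in> dom f" and b: "g y = Some b" "b \<in> dom f"
    by blast
  then have "f a = f b" using eq by simp
  then have "a = b" using f a b by (meson inj_onD)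
  then show "x = y" using g a b by (metis domI inj_onD)
qed

lemma pinv_Some:
  assumes inj: "inj_on f (dom f)"
  shows "pinv f y = Some x \<longleftrightarrow> f x = Some y"
proof -
  have uniq: "w = z" if "f w = Some y" "f z = Some y" for w z
    using that inj by (metis domI inj_onD)
  then have "(THE x. f x = Some y) = z" if "f z = Some y" for z
    using that by blast
  then show ?thesis using uniq by (auto simp: pinv_def ran_def)
qed

lemma dom_pinv: "dom (pinv f) = ran f"
  by (rule set_eqI) (simp add: pinv_def dom_def)

lemma ran_eq_image_dom: "ran f = (\<lambda>x. the (f x)) ` dom f"
  unfolding ran_def dom_def by (auto intro!: image_eqI)

lemma pinv_preimage:
  assumes "inj_on f (dom f)"
  shows "{y\<in>dom (pinv f). the (pinv f y) \<in> A} = (\<lambda>x. the (f x)) ` (A \<inter> dom f)"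
  using pinv_Some[OF assms] by (force simp: image_iff)

lemma pinv_image:
  assumes "inj_on f (dom f)" and "A \<subseteq> dom (pinv f)"
  shows "(\<lambda>y. the (pinv f y)) ` A = {x\<in>dom f. the (f x) \<in> A}"
  using assms pinv_Some[OF assms(1)] by (force simp: image_iff subset_iff)

definition partial_id :: "'a set \<Rightarrow> ('a \<rightharpoonup> 'a)" where
  "partial_id A = (\<lambda>x. if x \<in> A then Some x else None)"

lemma pinv_comp_self:
  assumes "inj_on f (dom f)"
  shows "pinv f \<circ>\<^sub>m f = partial_id (dom f)"
proof
  fix x show "(pinv f \<circ>\<^sub>m f) x = partial_id (dom f) x"
    by (cases "f x") (auto simp: partial_id_def pinv_Some[OF assms])
qed

lemma map_comp_partial_id_dom: "f \<circ>\<^sub>m partial_id (dom f) = f"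
proof
  fix x show "(f \<circ>\<^sub>m partial_id (dom f)) x = f x"
    by (cases "f x") (auto simp: partial_id_def map_comp_def)
qed

lemma partial_id_idem: "partial_id A \<circ>\<^sub>m partial_id A = partial_id A"
  by (rule ext) (simp add: map_comp_def partial_id_def)


section \<open>Borel partial bijections: identity, composition and inverses\<close>

lemma borel_pbijI:
  assumes "dom f \<in> sets M" and "inj_on f (dom f)"
    and "\<And>x. x \<in> dom f \<Longrightarrow> (x, the (f x)) \<in> R"
    and "\<And>A. A \<in> sets M \<Longrightarrow> {x\<in>dom f. the (f x) \<in> A} \<in> sets M"
    and "\<And>A. A \<in> sets M \<Longrightarrow> A \<subseteq> dom f \<Longrightarrow> (\<lambda>x. the (f x)) ` A \<in> sets M"
  shows "borel_pbij M R f"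
  using assms unfolding borel_pbij_def by blast

lemma borel_pbijD:
  assumes "borel_pbij M R f"
  shows "dom f \<in> sets M" and "inj_on f (dom f)"
    and "x \<in> dom f \<Longrightarrow> (x, the (f x)) \<in> R"
    and "A \<in> sets M \<Longrightarrow> {x\<in>dom f. the (f x) \<in> A} \<in> sets M"
    and "A \<in> sets M \<Longrightarrow> A \<subseteq> dom f \<Longrightarrow> (\<lambda>x. the (f x)) ` A \<in> sets M"
  using assms unfolding borel_pbij_def by blast+

lemma Some_pbij:
  assumes "space M = UNIV" and "refl R"
  shows "borel_pbij M R Some"
  using assms sets.top[of M] by (intro borel_pbijI) (auto simp: refl_on_def)

lemma comp_pbij:
  assumes f: "borel_pbij M R f" and g: "borel_pbij M R g" and "trans R"
  shows "borel_pbij M R (f \<circ>\<^sub>m g)"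
proof (rule borel_pbijI)
  show "dom (f \<circ>\<^sub>m g) \<in> sets M"
    unfolding dom_map_comp by (intro borel_pbijD(4)[OF g] borel_pbijD(1)[OF f])
  show "inj_on (f \<circ>\<^sub>m g) (dom (f \<circ>\<^sub>m g))"
    by (intro inj_on_dom_map_comp borel_pbijD(2)[OF f] borel_pbijD(2)[OF g])
  show "(x, the ((f \<circ>\<^sub>m g) x)) \<in> R" if "x \<in> dom (f \<circ>\<^sub>m g)" for x
  proof -
    have "\<exists>a. g x = Some a \<and> a \<in> dom f"
      using that by (auto simp: map_comp_def split: option.splits)
    then obtain a where a: "g x = Some a" "a \<in> dom f" by blast
    have "(x, a) \<in> R" using borel_pbijD(3)[OF g, of x] a(1) by (simp add: domIff)
    moreover have "(a, the (f a)) \<in> R" using borel_pbijD(3)[OF f] a(2) by simp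
    ultimately have "(x, the (f a)) \<in> R" by (rule transD[OF \<open>trans R\<close>])
    then show ?thesis using a(1) by simp
  qed
  show "{x\<in>dom (f \<circ>\<^sub>m g). the ((f \<circ>\<^sub>m g) x) \<in> A} \<in> sets M" if "A \<in> sets M" for A
  proof -
    have eq: "{x\<in>dom (f \<circ>\<^sub>m g). the ((f \<circ>\<^sub>m g) x) \<in> A}
        = {x\<in>dom g. the (g x) \<in> {y\<in>dom f. the (f y) \<in> A}}"
      by (auto simp: map_comp_def split: option.splits)
    show ?thesis unfolding eq by (rule borel_pbijD(4)[OF g borel_pbijD(4)[OF f that]])
  qed
  show "(\<lambda>x. the ((f \<circ>\<^sub>m g) x)) ` A \<in> sets M" if "A \<in> sets M" "A \<subseteq> dom (f \<circ>\<^sub>m g)" for A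
  proof -
    have "(\<lambda>x. the ((f \<circ>\<^sub>m g) x)) ` A = (\<lambda>y. the (f y)) ` ((\<lambda>x. the (g x)) ` A)"
      using that(2) by (force simp: dom_map_comp map_comp_def image_iff split: option.splits)
    moreover have "(\<lambda>x. the (g x)) ` A \<in> sets M" "(\<lambda>x. the (g x)) ` A \<subseteq> dom f"
      using that borel_pbijD(5)[OF g] unfolding dom_map_comp by auto
    ultimately show ?thesis using borel_pbijD(5)[OF f] by simp
  qed
qed

text \<open>Symmetry of R makes them closed under inversion; preimages and images swap roles.\<close>
lemma pinv_pbij:
  assumes f: "borel_pbij M R f" and "sym R"
  shows "borel_pbij M R (pinv f)"
proof (rule borel_pbijI)
  have inj: "inj_on f (dom f)" by (rule borel_pbijD(2)[OF f])
  have "(\<lambda>x. the (f x)) ` dom f \<in> sets M" using borel_pbijD(1,5)[OF f] by simp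
  then show "dom (pinv f) \<in> sets M" by (simp add: dom_pinv ran_eq_image_dom)
  show "inj_on (pinv f) (dom (pinv f))"
  proof (rule inj_onI)
    fix a b assume a: "a \<in> dom (pinv f)" and eq: "pinv f a = pinv f b"
    obtain x where x: "pinv f a = Some x" using domD[OF a] by blast
    moreover have "pinv f b = Some x" using x eq by simp
    ultimately have "f x = Some a" "f x = Some b" using pinv_Some[OF inj] by blast+
    then show "a = b" by simp
  qed
  show "(y, the (pinv f y)) \<in> R" if y: "y \<in> dom (pinv f)" for y
  proof -
    obtain x where x: "pinv f y = Some x" using domD[OF y] by blast
    then have fx: "f x = Some y" by (simp add: pinv_Some[OF inj])
    then have "(x, y) \<in> R" using borel_pbijD(3)[OF f, of x] by auto
    then have "(y, x) \<in> R" by (rule symD[OF \<open>sym R\<close>])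
    then show ?thesis using x by simp
  qed
  show "{y\<in>dom (pinv f). the (pinv f y) \<in> A} \<in> sets M" if "A \<in> sets M" for A
    unfolding pinv_preimage[OF inj]
    by (intro borel_pbijD(5)[OF f] sets.Int that borel_pbijD(1)[OF f]) auto
  show "(\<lambda>y. the (pinv f y)) ` A \<in> sets M" if "A \<in> sets M" "A \<subseteq> dom (pinv f)" for A
    unfolding pinv_image[OF inj that(2)] by (rule borel_pbijD(4)[OF f that(1)])
qed

lemma pbij_pmp: "pmp_rel M R \<Longrightarrow> borel_pbij M R f \<Longrightarrow> pmp_partial M R f"
  unfolding pmp_rel_def pmp_partial_def by blast


section \<open>Classes modulo null sets\<close>

text \<open>Every class of a measure-preserving partial bijection is nonempty, so its chosen
  representative agrees with the generating map almost everywhere.\<close>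
lemma rep_in_class: "pmp_partial M R f \<Longrightarrow> pg_rep (pg_class M R f) \<in> pg_class M R f"
  unfolding pg_rep_def by (rule someI[of _ f]) (simp add: pg_class_def)

lemma rep_AE: "pmp_partial M R f \<Longrightarrow> AE x in M. pg_rep (pg_class M R f) x = f x"
  using rep_in_class unfolding pg_class_def by blast

lemma class_cong:
  assumes "AE x in M. f x = g x"
  shows "pg_class M R f = pg_class M R g"
proof -
  have "(AE x in M. h x = f x) \<longleftrightarrow> (AE x in M. h x = g x)" for h
    using assms by auto
  then show ?thesis unfolding pg_class_def by simp
qed

lemma class_rep_class:
  "pmp_partial M R f \<Longrightarrow> pg_class M R (pg_rep (pg_class M R f)) = pg_class M R f"
  by (rule class_cong[OF rep_AE])

lemma pseudo_elem:
  assumes "S \<in> pseudogroup M R"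
  shows "pmp_partial M R (pg_rep S)" and "S = pg_class M R (pg_rep S)"
proof -
  obtain f where f: "pmp_partial M R f" "S = pg_class M R f"
    using assms unfolding pseudogroup_def by blast
  then show "pmp_partial M R (pg_rep S)" using rep_in_class unfolding pg_class_def by blast
  show "S = pg_class M R (pg_rep S)" using f class_rep_class by metis
qed

lemma pseudo_class: "pmp_partial M R f \<Longrightarrow> pg_class M R f \<in> pseudogroup M R"
  unfolding pseudogroup_def by blast

text \<open>Precomposing with a measure-preserving g respects a.e. equality, since g pulls null sets
  back to null sets.\<close>
lemma AE_comp_outer:
  assumes g: "pmp_partial M R g" and sp: "space M = UNIV"
    and hh: "AE x in M. h x = h' x"
  shows "AE x in M. (h \<circ>\<^sub>m g) x = (h' \<circ>\<^sub>m g) x"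
proof -
  from hh obtain N where N: "{x \<in> space M. h x \<noteq> h' x} \<subseteq> N" "emeasure M N = 0" "N \<in> sets M"
    by (rule AE_E)
  have pb: "borel_pbij M R g" and mp: "meas_pres M g" using g unfolding pmp_partial_def by auto
  define A where "A = {x\<in>dom g. the (g x) \<in> N}"
  have A: "A \<in> sets M" "A \<subseteq> dom g" using pb N(3) unfolding A_def borel_pbij_def by auto
  have "emeasure M A = emeasure M ((\<lambda>x. the (g x)) ` A)" using mp A unfolding meas_pres_def by simp
  also have "\<dots> \<le> emeasure M N" using N(3) by (intro emeasure_mono) (auto simp: A_def)
  finally have "A \<in> null_sets M" using A N(2) by (simp add: null_sets_def)
  then show ?thesis
    by (rule AE_I') (use N(1) sp in \<open>auto simp: A_def map_comp_def split: option.splits\<close>)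
qed

lemma mult_class:
  assumes sp: "space M = UNIV" and f: "pmp_partial M R f" and g: "pmp_partial M R g"
  shows "pg_mult M R (pg_class M R f) (pg_class M R g) = pg_class M R (f \<circ>\<^sub>m g)"
proof -
  let ?rf = "pg_rep (pg_class M R f)" and ?rg = "pg_rep (pg_class M R g)"
  have "AE x in M. (?rf \<circ>\<^sub>m ?rg) x = (f \<circ>\<^sub>m ?rg) x"
    by (rule AE_comp_outer[OF pseudo_elem(1)[OF pseudo_class[OF g]] sp rep_AE[OF f]])
  moreover have "AE x in M. (f \<circ>\<^sub>m ?rg) x = (f \<circ>\<^sub>m g) x"
    using rep_AE[OF g] by eventually_elim (simp add: map_comp_def)
  ultimately have "AE x in M. (?rf \<circ>\<^sub>m ?rg) x = (f \<circ>\<^sub>m g) x" by eventually_elim simp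
  then show ?thesis unfolding pg_mult_def by (rule class_cong)
qed

lemma pg_sum_single: "pg_sum M R {T} = pg_class M R (pg_rep T)"
proof -
  have "(SOME S. S \<in> {T} \<and> x \<in> dom (pg_rep S)) = T" if "x \<in> dom (pg_rep T)" for x
    using that by (intro some_equality) auto
  then have "(\<lambda>x. if \<exists>S\<in>{T}. x \<in> dom (pg_rep S)
      then pg_rep (SOME S. S \<in> {T} \<and> x \<in> dom (pg_rep S)) x else None) = pg_rep T"
    by (intro ext) (auto simp: domIff)
  then show ?thesis unfolding pg_sum_def by simp
qed

lemma pseudo_in_SigmaSums:
  assumes "T \<in> pseudogroup M R" and "T \<in> A"
  shows "T \<in> SigmaSums M R A"
proof -
  have "pg_sum M R {T} = T" using pseudo_elem[OF assms(1)] by (simp add: pg_sum_single)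
  then show ?thesis using assms(2) unfolding SigmaSums_def by force
qed


section \<open>The support idempotent of an element\<close>

definition support_idem :: "'a measure \<Rightarrow> ('a \<times> 'a) set \<Rightarrow> ('a \<rightharpoonup> 'a) set \<Rightarrow> ('a \<rightharpoonup> 'a) set" where
  "support_idem M R S = pg_class M R (partial_id (dom (pg_rep S)))"

text \<open>The partial identity on \<open>dom S\<close> equals \<open>S\<^sup>-\<^sup>1 \<circ> S\<close>, hence lies in [[R]].\<close>
lemma partial_id_dom_pmp:
  assumes eqv: "equiv UNIV R" and pr: "pmp_rel M R" and f: "pmp_partial M R f"
  shows "pmp_partial M R (partial_id (dom f))"
proof -
  have fb: "borel_pbij M R f" using f unfolding pmp_partial_def by blast
  have "sym R" "trans R" using eqv unfolding equiv_def by auto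
  have "pinv f \<circ>\<^sub>m f = partial_id (dom f)" by (rule pinv_comp_self[OF borel_pbijD(2)[OF fb]])
  moreover have "pmp_partial M R (pinv f \<circ>\<^sub>m f)"
    by (rule pbij_pmp[OF pr comp_pbij[OF pinv_pbij[OF fb \<open>sym R\<close>] fb \<open>trans R\<close>]])
  ultimately show ?thesis by simp
qed

lemma support_idem_relations:
  assumes sp: "space M = UNIV" and eqv: "equiv UNIV R" and pr: "pmp_rel M R"
    and S: "S \<in> pseudogroup M R"
  defines "e \<equiv> support_idem M R S"
  shows "pg_mult M R S (pg_one M R) = S"
    and "pg_mult M R (pg_one M R) (pg_one M R) = pg_one M R"
    and "pg_mult M R (pg_inv M R S) S = e"
    and "pg_mult M R S e = S"
    and "pg_mult M R e e = e"
    and "e \<in> pseudogroup M R"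
proof -
  define f where "f = pg_rep S"
  have f: "pmp_partial M R f" and Sf: "S = pg_class M R f"
    using pseudo_elem[OF S] unfolding f_def by auto
  have fb: "borel_pbij M R f" using f unfolding pmp_partial_def by blast
  have "refl R" "sym R" using eqv unfolding equiv_def by auto
  have one: "pmp_partial M R Some" by (rule pbij_pmp[OF pr Some_pbij]) fact+
  have fi: "pmp_partial M R (pinv f)" by (rule pbij_pmp[OF pr pinv_pbij]) fact+
  have ef: "pinv f \<circ>\<^sub>m f = partial_id (dom f)" by (rule pinv_comp_self[OF borel_pbijD(2)[OF fb]])
  have ep: "pmp_partial M R (partial_id (dom f))" by (rule partial_id_dom_pmp[OF eqv pr f])
  have e: "e = pg_class M R (partial_id (dom f))" unfolding e_def support_idem_def f_def ..
  have inv: "pg_inv M R S = pg_class M R (pinv f)" unfolding pg_inv_def f_def ..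
  show "pg_mult M R S (pg_one M R) = S"
    unfolding pg_one_def Sf mult_class[OF sp f one] by (simp add: map_comp_def)
  show "pg_mult M R (pg_one M R) (pg_one M R) = pg_one M R"
    unfolding pg_one_def mult_class[OF sp one one] by (simp add: map_comp_def)
  show "pg_mult M R (pg_inv M R S) S = e"
    unfolding inv e by (subst Sf) (simp add: mult_class[OF sp fi f] ef)
  show "pg_mult M R S e = S"
    unfolding e by (subst (1 2) Sf) (simp add: mult_class[OF sp f ep] map_comp_partial_id_dom)
  show "pg_mult M R e e = e"
    unfolding e by (simp add: mult_class[OF sp ep ep] partial_id_idem)
  show "e \<in> pseudogroup M R" unfolding e by (rule pseudo_class[OF ep])
qed

text \<open>For \<open>S \<in> F\<close>, both \<open>S = S \<cdot> 1\<close> and \<open>e\<^sub>S = S\<^sup>-\<^sup>1 S\<close> are products of two letters of \<open>F\<^sub>\<plusminus>\<close>,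
  so they lie in \<open>\<Sigma>F\<^sub>\<plusminus>\<^sup>2\<close>.\<close>
lemma support_idem_SigmaSums:
  assumes sp: "space M = UNIV" and eqv: "equiv UNIV R" and pr: "pmp_rel M R"
    and FS: "F \<subseteq> pseudogroup M R" and S: "S \<in> F"
  shows "S \<in> SigmaSums M R (Fpow M R F 2)"
    and "support_idem M R S \<in> SigmaSums M R (Fpow M R F 2)"
proof -
  note rel = support_idem_relations[OF sp eqv pr subsetD[OF FS S]]
  have letters: "S \<in> Fpm M R F" "pg_one M R \<in> Fpm M R F" "pg_inv M R S \<in> Fpm M R F"
    using S unfolding Fpm_def by auto
  have "foldr (pg_mult M R) [S, pg_one M R] (pg_one M R) = S" using rel(1,2) by simp
  then have "S \<in> Fpow M R F 2"
    unfolding Fpow_def using letters by (intro CollectI exI[of _ "[S, pg_one M R]"]) auto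
  then show "S \<in> SigmaSums M R (Fpow M R F 2)" using FS S by (intro pseudo_in_SigmaSums) auto
  have "foldr (pg_mult M R) [pg_inv M R S, S] (pg_one M R) = support_idem M R S"
    using rel(1,3) by simp
  then have "support_idem M R S \<in> Fpow M R F 2"
    unfolding Fpow_def using letters by (intro CollectI exI[of _ "[pg_inv M R S, S]"]) auto
  then show "support_idem M R S \<in> SigmaSums M R (Fpow M R F 2)"
    using rel(6) by (intro pseudo_in_SigmaSums)
qed

lemma tau_support_idem:
  assumes P: "prob_space M" and sp: "space M = UNIV" and eqv: "equiv UNIV R" and pr: "pmp_rel M R"
    and S: "S \<in> pseudogroup M R"
  shows "pg_tau M (support_idem M R S) \<le> measure M (dom (pg_rep S))"
proof -
  interpret prob_space M by (rule P)
  have f: "pmp_partial M R (pg_rep S)" by (rule pseudo_elem[OF S])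
  then have dm: "dom (pg_rep S) \<in> sets M" unfolding pmp_partial_def borel_pbij_def by blast
  have "AE x in M. pg_rep (support_idem M R S) x = partial_id (dom (pg_rep S)) x"
    unfolding support_idem_def by (rule rep_AE[OF partial_id_dom_pmp[OF eqv pr f]])
  then have "AE x in M. x \<in> {x. pg_rep (support_idem M R S) x = Some x} \<longrightarrow> x \<in> dom (pg_rep S)"
    by eventually_elim (auto simp: partial_id_def split: if_splits)
  then show ?thesis
    unfolding pg_tau_def using dm by (rule finite_measure_mono_AE)
qed


section \<open>Partial permutations of {1..d}\<close>

text \<open>If q is almost idempotent with few fixed points and p is almost invariant under q on the
  right, then p has a small domain: outside the two defect sets, every point of dom p is fixed by q.\<close>
lemma card_dom_le_of_almost_idempotent:
  assumes p: "pperm d p" and q: "pperm d q" and dp: "pp_dist d p (p \<circ>\<^sub>m q) < \<delta>"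
    and dq: "pp_dist d q (q \<circ>\<^sub>m q) < \<delta>" and tq: "pp_tr d q < c + \<delta>" and dpos: "d > 0"
  shows "real (card (dom p)) \<le> (c + 3 * \<delta>) * real d"
proof -
  define A where "A = {i\<in>{1..d}. p i \<noteq> (p \<circ>\<^sub>m q) i}"
  define B where "B = {i\<in>{1..d}. q i \<noteq> (q \<circ>\<^sub>m q) i}"
  define C where "C = {i\<in>{1..d}. q i = Some i}"
  have injq: "inj_on q (dom q)" using q unfolding pperm_def by blast
  have "dom p \<subseteq> A \<union> B \<union> C"
  proof
    fix i assume i: "i \<in> dom p"
    then have iI: "i \<in> {1..d}" using p unfolding pperm_def by blast
    show "i \<in> A \<union> B \<union> C"
    proof (rule ccontr)
      assume "i \<notin> A \<union> B \<union> C"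
      then have e1: "p i = (p \<circ>\<^sub>m q) i" and e2: "q i = (q \<circ>\<^sub>m q) i" and nf: "q i \<noteq> Some i"
        using iI unfolding A_def B_def C_def by blast+
      have "(p \<circ>\<^sub>m q) i \<noteq> None" using i e1 by (metis domIff)
      then obtain j where j: "q i = Some j" by (cases "q i") auto
      then have "(q \<circ>\<^sub>m q) i = q j" by simp
      then have "q j = Some j" using e2 j by argo
      then have "i = j" using injq j by (metis domI inj_onD)
      then show False using j nf by simp
    qed
  qed
  moreover have "finite A" "finite B" "finite C" unfolding A_def B_def C_def by auto
  ultimately have "card (dom p) \<le> card (A \<union> B \<union> C)" by (intro card_mono) auto
  also have "\<dots> \<le> card A + card B + card C"
    using card_Un_le[of "A \<union> B" C] card_Un_le[of A B] by linarith
  finally have "real (card (dom p)) \<le> real (card A) + real (card B) + real (card C)" by linarith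
  moreover have "real (card A) < \<delta> * real d"
    using dp dpos unfolding pp_dist_def A_def by (simp add: field_simps)
  moreover have "real (card B) < \<delta> * real d"
    using dq dpos unfolding pp_dist_def B_def by (simp add: field_simps)
  moreover have "real (card C) < (c + \<delta>) * real d"
    using tq dpos unfolding pp_tr_def C_def by (simp add: field_simps)
  ultimately show ?thesis by (simp add: algebra_simps)
qed

lemma inj_dom_values: "inj (\<lambda>\<sigma>::'a \<rightharpoonup> 'b. (dom \<sigma>, restrict (\<lambda>i. the (\<sigma> i)) (dom \<sigma>)))"
proof (rule injI)
  fix \<sigma> \<tau> :: "'a \<rightharpoonup> 'b"
  assume "(dom \<sigma>, restrict (\<lambda>i. the (\<sigma> i)) (dom \<sigma>)) = (dom \<tau>, restrict (\<lambda>i. the (\<tau> i)) (dom \<tau>))"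
  then have dom: "dom \<sigma> = dom \<tau>"
    and vals: "restrict (\<lambda>i. the (\<sigma> i)) (dom \<sigma>) = restrict (\<lambda>i. the (\<tau> i)) (dom \<tau>)" by auto
  show "\<sigma> = \<tau>"
  proof
    fix i show "\<sigma> i = \<tau> i"
    proof (cases "i \<in> dom \<sigma>")
      case True
      then have "the (\<sigma> i) = the (\<tau> i)" using dom vals by (metis restrict_apply')
      then show ?thesis using True dom by (metis domIff option.expand)
    qed (use dom in \<open>metis domIff\<close>)
  qed
qed

lemma count_pperm:
  fixes K :: real
  assumes d1: "d \<ge> 1"
  defines "P \<equiv> {\<sigma>. pperm d \<sigma> \<and> real (card (dom \<sigma>)) \<le> K}"
  shows "finite P" and "real (card P) \<le> 2 ^ d * real d powr K"
proof -
  define Ds where "Ds = {D\<in>Pow {1..d}. real (card D) \<le> K}"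
  define T where "T = (SIGMA D:Ds. PiE D (\<lambda>_. {1..d}))"
  define \<Phi> where "\<Phi> = (\<lambda>\<sigma>::nat \<rightharpoonup> nat. (dom \<sigma>, restrict (\<lambda>i. the (\<sigma> i)) (dom \<sigma>)))"
  have inj: "inj_on \<Phi> P" using inj_dom_values unfolding \<Phi>_def by (rule inj_on_subset) simp
  have finDs: "finite Ds" "\<And>D. D \<in> Ds \<Longrightarrow> finite D"
    unfolding Ds_def by (auto intro: finite_subset)
  have finT: "finite T" unfolding T_def using finDs by (intro finite_SigmaI finite_PiE) auto
  have img: "\<Phi> ` P \<subseteq> T"
    unfolding P_def T_def Ds_def \<Phi>_def pperm_def by (force simp: PiE_iff ran_def)
  show finP: "finite P" using finite_imageD[OF finite_subset[OF img finT] inj] .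
  have "card P \<le> card T" using card_inj_on_le[OF inj img finT] .
  also have "card T = (\<Sum>D\<in>Ds. d ^ card D)"
    unfolding T_def using finDs by (simp add: card_SigmaI finite_PiE card_PiE)
  finally have "real (card P) \<le> real (\<Sum>D\<in>Ds. d ^ card D)" by (rule of_nat_mono)
  also have "\<dots> = (\<Sum>D\<in>Ds. real d ^ card D)" by simp
  also have "\<dots> \<le> (\<Sum>D\<in>Ds. real d powr K)"
  proof (rule sum_mono)
    fix D assume "D \<in> Ds"
    then have "real d powr real (card D) \<le> real d powr K" using d1 unfolding Ds_def by (intro powr_mono) auto
    then show "real d ^ card D \<le> real d powr K" using d1 by (simp add: powr_realpow)
  qed
  also have "\<dots> \<le> (\<Sum>D\<in>Pow {1..d}. real d powr K)" by (rule sum_mono2) (auto simp: Ds_def)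
  also have "\<dots> = 2 ^ d * real d powr K" by (simp add: card_Pow)
  finally show "real (card P) \<le> 2 ^ d * real d powr K" .
qed


section \<open>Sofic approximations at level 2\<close>

lemma card_dom_sofic_le:
  assumes P: "prob_space M" and sp: "space M = UNIV" and eqv: "equiv UNIV R" and pr: "pmp_rel M R"
    and FS: "F \<subseteq> pseudogroup M R" and S: "S \<in> F"
    and phi: "\<phi> \<in> SA M R F 2 \<delta> d" and dpos: "d > 0"
  shows "pperm d (\<phi> S)" and "real (card (dom (\<phi> S))) \<le> (measure M (dom (pg_rep S)) + 3 * \<delta>) * real d"
proof -
  define e where "e = support_idem M R S"
  define Sg where "Sg = SigmaSums M R (Fpow M R F 2)"
  have SP: "S \<in> pseudogroup M R" using FS S by blast
  note rel = support_idem_relations[OF sp eqv pr SP, folded e_def]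
  have SSg: "S \<in> Sg" and eSg: "e \<in> Sg"
    using support_idem_SigmaSums[OF sp eqv pr FS S] unfolding Sg_def e_def by auto
  have approx: "\<forall>T\<in>pseudogroup M R. pperm d (\<phi> T)"
      "\<forall>s\<in>Sg. \<forall>t\<in>Sg. pg_mult M R s t \<in> Sg \<longrightarrow> pp_dist d (\<phi> (pg_mult M R s t)) (\<phi> s \<circ>\<^sub>m \<phi> t) < \<delta>"
      "\<forall>s\<in>Sg. \<bar>pp_tr d (\<phi> s) - pg_tau M s\<bar> < \<delta>"
    using phi unfolding SA_def Let_def Sg_def by blast+
  show pS: "pperm d (\<phi> S)" using approx(1) SP by blast
  have "pp_dist d (\<phi> S) (\<phi> S \<circ>\<^sub>m \<phi> e) < \<delta>" using approx(2) SSg eSg rel(4) by metis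
  moreover have "pp_dist d (\<phi> e) (\<phi> e \<circ>\<^sub>m \<phi> e) < \<delta>" using approx(2) eSg rel(5) by metis
  moreover have "pp_tr d (\<phi> e) < measure M (dom (pg_rep S)) + \<delta>"
    using approx(3) eSg tau_support_idem[OF P sp eqv pr SP] unfolding e_def by fastforce
  ultimately show "real (card (dom (\<phi> S))) \<le> (measure M (dom (pg_rep S)) + 3 * \<delta>) * real d"
    using card_dom_le_of_almost_idempotent pS approx(1) rel(6) dpos by blast
qed

lemma ln_NSA_le:
  assumes P: "prob_space M" and sp: "space M = UNIV" and eqv: "equiv UNIV R" and pr: "pmp_rel M R"
    and fF: "finite F" and FS: "F \<subseteq> pseudogroup M R" and d1: "d \<ge> 1"
    and pos: "NSA M R F 2 \<delta> d > 0"
  shows "ln (real (NSA M R F 2 \<delta> d))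
    \<le> real (card F) * real d * ln 2 + (pg_cost M F + 3 * \<delta> * real (card F)) * real d * ln (real d)"
proof -
  define K where "K = (\<lambda>S. (measure M (dom (pg_rep S)) + 3 * \<delta>) * real d)"
  define Pset where "Pset = (\<lambda>S. {\<sigma>. pperm d \<sigma> \<and> real (card (dom \<sigma>)) \<le> K S})"
  have img: "(\<lambda>\<phi>. restrict \<phi> F) ` SA M R F 2 \<delta> d \<subseteq> PiE F Pset"
    using card_dom_sofic_le[OF P sp eqv pr FS] d1 unfolding Pset_def K_def by fastforce
  have finPi: "finite (PiE F Pset)"
    using fF count_pperm(1)[OF d1] unfolding Pset_def by (intro finite_PiE) auto
  have "real (NSA M R F 2 \<delta> d) \<le> real (card (PiE F Pset))"
    unfolding NSA_def by (intro of_nat_mono card_mono[OF finPi img])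
  also have "\<dots> = (\<Prod>S\<in>F. real (card (Pset S)))" by (simp add: card_PiE[OF fF])
  also have "\<dots> \<le> (\<Prod>S\<in>F. 2 ^ d * real d powr K S)"
    using count_pperm(2)[OF d1] unfolding Pset_def by (intro prod_mono) auto
  also have "\<dots> = (\<Prod>S\<in>F. exp (real d * ln 2 + K S * ln (real d)))"
    using d1 by (intro prod.cong) (simp_all add: powr_def exp_add exp_of_nat_mult mult.commute)
  also have "\<dots> = exp (\<Sum>S\<in>F. real d * ln 2 + K S * ln (real d))" by (simp add: exp_sum fF)
  finally have "ln (real (NSA M R F 2 \<delta> d)) \<le> ln (exp (\<Sum>S\<in>F. real d * ln 2 + K S * ln (real d)))"
    using pos by (intro ln_mono) auto
  also have "\<dots> = (\<Sum>S\<in>F. real d * ln 2 + K S * ln (real d))" by simp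
  also have "\<dots> = real (card F) * real d * ln 2 + (\<Sum>S\<in>F. K S) * ln (real d)"
    by (simp add: sum.distrib sum_distrib_right)
  also have "(\<Sum>S\<in>F. K S) = (pg_cost M F + 3 * \<delta> * real (card F)) * real d"
    unfolding K_def pg_cost_def by (simp add: sum.distrib sum_distrib_right sum_distrib_left algebra_simps)
  finally show ?thesis .
qed

definition sofic_ratio :: "'a measure \<Rightarrow> ('a \<times> 'a) set \<Rightarrow> ('a \<rightharpoonup> 'a) set set \<Rightarrow> real \<Rightarrow> nat \<Rightarrow> ereal" where
  "sofic_ratio M R F \<delta> = (\<lambda>d. if NSA M R F 2 \<delta> d = 0 then -\<infinity>
      else ereal (ln (real (NSA M R F 2 \<delta> d)) / (real d * ln (real d))))"

lemma sofic_ratio_le: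
  assumes P: "prob_space M" and sp: "space M = UNIV" and eqv: "equiv UNIV R" and pr: "pmp_rel M R"
    and fF: "finite F" and FS: "F \<subseteq> pseudogroup M R" and d2: "d \<ge> 2"
  shows "sofic_ratio M R F \<delta> d
    \<le> ereal (real (card F) * ln 2 / ln (real d) + (pg_cost M F + 3 * \<delta> * real (card F)))"
proof (cases "NSA M R F 2 \<delta> d = 0")
  case False
  have lnd: "ln (real d) > 0" using d2 by simp
  have "ln (real (NSA M R F 2 \<delta> d)) / (real d * ln (real d))
     \<le> (real (card F) * real d * ln 2 + (pg_cost M F + 3 * \<delta> * real (card F)) * real d * ln (real d))
        / (real d * ln (real d))"
    using ln_NSA_le[OF P sp eqv pr fF FS] False d2 lnd by (intro divide_right_mono) auto
  also have "\<dots> = real (card F) * ln 2 / ln (real d) + (pg_cost M F + 3 * \<delta> * real (card F))"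
    using lnd d2 by (simp add: field_simps)
  finally show ?thesis using False unfolding sofic_ratio_def by simp
qed (simp add: sofic_ratio_def)

lemma limsup_sofic_ratio_le:
  assumes P: "prob_space M" and sp: "space M = UNIV" and eqv: "equiv UNIV R" and pr: "pmp_rel M R"
    and fF: "finite F" and FS: "F \<subseteq> pseudogroup M R"
  shows "limsup (sofic_ratio M R F \<delta>) \<le> ereal (pg_cost M F + 3 * \<delta> * real (card F))"
proof -
  define a where "a = real (card F) * ln 2"
  define c where "c = pg_cost M F + 3 * \<delta> * real (card F)"
  have "filterlim (\<lambda>d::nat. ln (real d)) at_top sequentially"
    by (rule filterlim_compose[OF ln_at_top filterlim_real_sequentially])
  then have "((\<lambda>d::nat. a / ln (real d)) \<longlongrightarrow> 0) sequentially"
    by (intro tendsto_divide_0[OF tendsto_const] filterlim_at_top_imp_at_infinity)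
  then have lim: "((\<lambda>d::nat. ereal (a / ln (real d) + c)) \<longlongrightarrow> ereal c) sequentially"
    by (intro tendsto_ereal) (auto intro: tendsto_eq_intros)
  have "eventually (\<lambda>d. sofic_ratio M R F \<delta> d \<le> ereal (a / ln (real d) + c)) sequentially"
    using sofic_ratio_le[OF assms] unfolding a_def c_def by (intro eventually_sequentiallyI[of 2])
  then have "limsup (sofic_ratio M R F \<delta>) \<le> limsup (\<lambda>d. ereal (a / ln (real d) + c))"
    by (rule Limsup_mono)
  also have "\<dots> = ereal c" by (rule lim_imp_Limsup[OF trivial_limit_sequentially lim])
  finally show ?thesis unfolding c_def .
qed

lemma INF_le_of_linear_bound:
  fixes L :: "real \<Rightarrow> ereal"
  assumes k: "k \<ge> 0" and bound: "\<And>\<delta>. \<delta> > 0 \<Longrightarrow> L \<delta> \<le> ereal (c + \<delta> * k)"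
  shows "(INF \<delta>\<in>{0<..}. L \<delta>) \<le> ereal c"
proof (rule ereal_le_epsilon2)
  fix e :: real assume e: "0 < e"
  define \<delta> where "\<delta> = e / (k + 1)"
  have dpos: "\<delta> > 0" unfolding \<delta>_def using e k by simp
  have "\<delta> * k \<le> e" unfolding \<delta>_def using e k by (simp add: field_simps)
  have "(INF \<delta>\<in>{0<..}. L \<delta>) \<le> L \<delta>" using dpos by (intro INF_lower) simp
  also have "\<dots> \<le> ereal (c + \<delta> * k)" by (rule bound[OF dpos])
  also have "\<dots> \<le> ereal c + ereal e" using \<open>\<delta> * k \<le> e\<close> by simp
  finally show "(INF \<delta>\<in>{0<..}. L \<delta>) \<le> ereal c + ereal e" .
qed


text \<open>s(F) is at most its value at level n = 2, whose limsup in d is at most \<open>cost(F) + 3\<delta>|F|\<close>.\<close>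
theorem mainTheorem11:
  fixes M :: "'a::polish_space measure" and R :: "('a \<times> 'a) set"
    and F :: "('a \<rightharpoonup> 'a) set set"
  assumes "prob_space M" and "sets M = sets borel"
    and "cber M R" and "pmp_rel M R"
    and "finite F" and "F \<subseteq> pseudogroup M R"
  shows "sofic_s M R F \<le> ereal (pg_cost M F)"
proof -
  have sp: "space M = UNIV" using sets_eq_imp_space_eq[OF assms(2)] by simp
  have eqv: "equiv UNIV R" using assms(3) sp unfolding cber_def by simp
  have "sofic_s M R F \<le> (INF \<delta>\<in>{0<..}. limsup (sofic_ratio M R F \<delta>))"
    unfolding sofic_s_def sofic_ratio_def by (rule INF_lower) simp
  also have "\<dots> \<le> ereal (pg_cost M F)"
  proof (rule INF_le_of_linear_bound)
    show "limsup (sofic_ratio M R F \<delta>) \<le> ereal (pg_cost M F + \<delta> * (3 * real (card F)))" for \<delta>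
      using limsup_sofic_ratio_le[OF assms(1) sp eqv assms(4-6)] by (simp add: mult.assoc mult.left_commute)
  qed simp
  finally show ?thesis .
qed

end
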